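(* In the setting described in the context, the algorithm MCF/OD is optimal: if it returns a solution, then that solution has the lowest possible cost, i.e. the sum over all commodities of the cost of the longest routing allowed for that commodity is minimal among all conflict-tree nodes whose restricted MCF solution satisfies the influx limit $\theta_m$ at every intermediate vertex $m$.
   Context: Setting (inter-cell routing). $\mathcal{G}_p=(V_p,E_p)$ is a directed graph whose vertices are "cells"; each edge $e_{ml}\in E_p$ (from $m$ to $l$) has a positive weight, and the cost of a path is the sum of its edge weights. A commodity $c_{sg}\in\mathcal{C}=\{c_1,\dots,c_O\}$ is a group of $|c_{sg}|$ robots that all start at vertex $s$ and have goal vertex $g$. A flow assigns to each commodity $c_{sg}$ and edge $e_{ml}$ an integer $y_{sgml}\in[0,|c_{sg}|]$ satisfying flow conservation: for every vertex $l$, $\sum_{e_{ml}\in E_p} y_{sgml}-\sum_{e_{ln}\in E_p} y_{sgln}$ equals $|c_{sg}|$ if $l=g$, $-|c_{sg}|$ if $l=s$, and $0$ otherwise. The influx of a vertex $l$ is $\sum_{c_{sg}\in\mathcal{C}}\sum_{e_{ml}\in E_p} y_{sgml}$; influx limits $\theta_m$ are imposed at intermediate vertices (not the start or goal of the commodities concerned). A suboptimality bound $w_{\mathrm{mcf}}\ge1$ is given. Given, for each commodity, a set $SP_{sg}$ of allowed $s$–$g$ paths, the restricted MCF problem is the integer linear program: minimize $\alpha\sum_{c_{sg}}\mathcal{L}_{sg}+\beta\mathcal{L}_{in}$ (with $\beta\gg\alpha>0$) subject to flow conservation, $\mathcal{L}_{sg}\ge y_{sgml}$ for all edges and commodities,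 $\mathcal{L}_{in}\ge$ the influx of every intermediate vertex, $y_{sgml}\in[0,|c_{sg}|]$ for edges on a path of $SP_{sg}$, and $y_{sgml}=0$ otherwise. Algorithm MCF/OD (best-first search on a conflict tree). Each tree node stores a vector of counts $k_o\ge1$ ($o=1,\dots,O$), a set of allowed paths for each commodity (its $1$st through $k_o$-th shortest simple $s$–$g$ paths), a cost equal to the sum over commodities of the largest cost among that commodity's allowed paths, and a solution of the restricted MCF problem with these allowed paths. The root has all counts $1$. Repeatedly pop the OPEN node $P$ of lowest cost; compute the set $CS$ of intermediate vertices whose influx under $P$'s solution exceeds $\theta_m$; if $CS$ is empty, return $P$'s solution. Otherwise, for every commodity $c_o$ whose flow passes through a vertex of $CS$, create a child $A$ whose count vector is that of $P$ with $k_o$ increased by $1$ (skip if already visited), add the $k_o$-th shortest path $p_k$ of $c_o$ to its allowed paths; if the cost of $p_k$ is at most $w_{\mathrm{mcf}}$ times the cost of $c_o$'s shortest path, update $A$'s cost, solve the restricted MCF problem for $A$, and insert $A$ into OPEN if feasible. *)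

theory Defs
  imports Complex_Main
begin

text \<open>Commodities are indexed by 0, ..., ncom - 1.  Edges are pairs (m, l) meaning the
  directed edge from m to l.  A flow is a function y with y c e = y_{s g m l} for the
  commodity with index c and edge e = (m, l).\<close>

record 'v mcf_inst =
  verts  :: "'v set"
  edges  :: "('v \<times> 'v) set"
  wt     :: "'v \<times> 'v \<Rightarrow> real"
  ncom   :: nat
  src    :: "nat \<Rightarrow> 'v"
  dst    :: "nat \<Rightarrow> 'v"
  csize  :: "nat \<Rightarrow> nat"
  theta  :: "'v \<Rightarrow> real"
  alpha  :: real
  beta   :: real
  wmcf   :: real

type_synonym 'v flowv = "nat \<Rightarrow> ('v \<times> 'v) \<Rightarrow> nat"
type_synonym counts = "nat \<Rightarrow> nat"

definition wf_inst :: "'v mcf_inst \<Rightarrow> bool" where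
  "wf_inst I \<longleftrightarrow> finite (verts I) \<and> edges I \<subseteq> verts I \<times> verts I
     \<and> (\<forall>e\<in>edges I. wt I e > 0)
     \<and> (\<forall>c<ncom I. src I c \<in> verts I \<and> dst I c \<in> verts I \<and> src I c \<noteq> dst I c
                     \<and> csize I c > 0)
     \<and> 0 < alpha I \<and> alpha I < beta I \<and> wmcf I \<ge> 1"

definition path_edges :: "'v list \<Rightarrow> ('v \<times> 'v) set" where
  "path_edges p = set (zip p (tl p))"

definition path_cost :: "'v mcf_inst \<Rightarrow> 'v list \<Rightarrow> real" where
  "path_cost I p = sum_list (map (wt I) (zip p (tl p)))"

definition simple_sg_path :: "'v mcf_inst \<Rightarrow> nat \<Rightarrow> 'v list \<Rightarrow> bool" where
  "simple_sg_path I c p \<longleftrightarrow> p \<noteq> [] \<and> hd p = src I c \<and> last p = dst I c \<and> distinct p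
     \<and> path_edges p \<subseteq> edges I"

definition npaths :: "'v mcf_inst \<Rightarrow> nat \<Rightarrow> nat" where
  "npaths I c = card {p. simple_sg_path I c p}"

text \<open>ksp o k is the k-th shortest simple s-g path of commodity o (k = 1, 2, ...):
  an enumeration of all simple s-g paths in nondecreasing order of cost
  (ties broken arbitrarily).\<close>
definition is_ksp :: "'v mcf_inst \<Rightarrow> (nat \<Rightarrow> nat \<Rightarrow> 'v list) \<Rightarrow> bool" where
  "is_ksp I ksp \<longleftrightarrow> (\<forall>c<ncom I.
      bij_betw (ksp c) {1..npaths I c} {p. simple_sg_path I c p}
    \<and> (\<forall>i j. 1 \<le> i \<longrightarrow> i \<le> j \<longrightarrow> j \<le> npaths I c \<longrightarrow>
              path_cost I (ksp c i) \<le> path_cost I (ksp c j)))"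

definition allowed_paths :: "(nat \<Rightarrow> nat \<Rightarrow> 'v list) \<Rightarrow> counts \<Rightarrow> nat \<Rightarrow> 'v list set" where
  "allowed_paths ksp k c = ksp c ` {1..k c}"

definition allowed_edges :: "(nat \<Rightarrow> nat \<Rightarrow> 'v list) \<Rightarrow> counts \<Rightarrow> nat \<Rightarrow> ('v \<times> 'v) set" where
  "allowed_edges ksp k c = (\<Union>p\<in>allowed_paths ksp k c. path_edges p)"

definition inflow :: "'v mcf_inst \<Rightarrow> 'v flowv \<Rightarrow> nat \<Rightarrow> 'v \<Rightarrow> nat" where
  "inflow I y c l = (\<Sum>e\<in>{e\<in>edges I. snd e = l}. y c e)"

definition outflow :: "'v mcf_inst \<Rightarrow> 'v flowv \<Rightarrow> nat \<Rightarrow> 'v \<Rightarrow> nat" where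
  "outflow I y c l = (\<Sum>e\<in>{e\<in>edges I. fst e = l}. y c e)"

definition influx :: "'v mcf_inst \<Rightarrow> 'v flowv \<Rightarrow> 'v \<Rightarrow> nat" where
  "influx I y l = (\<Sum>c<ncom I. inflow I y c l)"

definition intermediate :: "'v mcf_inst \<Rightarrow> 'v set" where
  "intermediate I = verts I - (src I ` {..<ncom I} \<union> dst I ` {..<ncom I})"

definition flow_conservation :: "'v mcf_inst \<Rightarrow> 'v flowv \<Rightarrow> bool" where
  "flow_conservation I y \<longleftrightarrow> (\<forall>c<ncom I. \<forall>l\<in>verts I.
     int (inflow I y c l) - int (outflow I y c l) =
       (if l = dst I c then int (csize I c)
        else if l = src I c then - int (csize I c) else 0))"

text \<open>Constraints of the restricted MCF integer linear program for the allowed path sets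
  given by the count vector k; L c plays the role of L_{sg} and Lin of L_{in}.\<close>
definition rmcf_feasible ::
  "'v mcf_inst \<Rightarrow> (nat \<Rightarrow> nat \<Rightarrow> 'v list) \<Rightarrow> counts \<Rightarrow> 'v flowv \<Rightarrow> (nat \<Rightarrow> real) \<Rightarrow> real \<Rightarrow> bool"
  where
  "rmcf_feasible I ksp k y L Lin \<longleftrightarrow>
     flow_conservation I y
   \<and> (\<forall>c<ncom I. \<forall>e. y c e \<le> csize I c)
   \<and> (\<forall>c<ncom I. \<forall>e. e \<notin> edges I \<inter> allowed_edges ksp k c \<longrightarrow> y c e = 0)
   \<and> (\<forall>c<ncom I. \<forall>e\<in>edges I. L c \<ge> real (y c e))
   \<and> (\<forall>m\<in>intermediate I. Lin \<ge> real (influx I y m))"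

definition rmcf_objective :: "'v mcf_inst \<Rightarrow> (nat \<Rightarrow> real) \<Rightarrow> real \<Rightarrow> real" where
  "rmcf_objective I L Lin = alpha I * (\<Sum>c<ncom I. L c) + beta I * Lin"

definition rmcf_has_solution :: "'v mcf_inst \<Rightarrow> (nat \<Rightarrow> nat \<Rightarrow> 'v list) \<Rightarrow> counts \<Rightarrow> bool" where
  "rmcf_has_solution I ksp k \<longleftrightarrow> (\<exists>y L Lin. rmcf_feasible I ksp k y L Lin)"

definition rmcf_optimal :: "'v mcf_inst \<Rightarrow> (nat \<Rightarrow> nat \<Rightarrow> 'v list) \<Rightarrow> counts \<Rightarrow> 'v flowv \<Rightarrow> bool" where
  "rmcf_optimal I ksp k y \<longleftrightarrow> (\<exists>L Lin. rmcf_feasible I ksp k y L Lin \<and>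
      (\<forall>y' L' Lin'. rmcf_feasible I ksp k y' L' Lin' \<longrightarrow>
          rmcf_objective I L Lin \<le> rmcf_objective I L' Lin'))"

definition valid_counts :: "'v mcf_inst \<Rightarrow> counts \<Rightarrow> bool" where
  "valid_counts I k \<longleftrightarrow> (\<forall>c<ncom I. 1 \<le> k c \<and> k c \<le> npaths I c)"

definition is_rmcf_solver ::
  "'v mcf_inst \<Rightarrow> (nat \<Rightarrow> nat \<Rightarrow> 'v list) \<Rightarrow> (counts \<Rightarrow> 'v flowv option) \<Rightarrow> bool" where
  "is_rmcf_solver I ksp solve \<longleftrightarrow> (\<forall>k. valid_counts I k \<longrightarrow>
      (solve k = None \<longleftrightarrow> \<not> rmcf_has_solution I ksp k)
    \<and> (\<forall>y. solve k = Some y \<longrightarrow> rmcf_optimal I ksp k y))"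

definition node_cost :: "'v mcf_inst \<Rightarrow> (nat \<Rightarrow> nat \<Rightarrow> 'v list) \<Rightarrow> counts \<Rightarrow> real" where
  "node_cost I ksp k = (\<Sum>c<ncom I. Max (path_cost I ` allowed_paths ksp k c))"

definition conflict_set :: "'v mcf_inst \<Rightarrow> 'v flowv \<Rightarrow> 'v set" where
  "conflict_set I y = {m\<in>intermediate I. real (influx I y m) > theta I m}"

definition passes_conflict :: "'v mcf_inst \<Rightarrow> 'v flowv \<Rightarrow> nat \<Rightarrow> bool" where
  "passes_conflict I y c \<longleftrightarrow> (\<exists>e\<in>edges I. snd e \<in> conflict_set I y \<and> y c e > 0)"

definition root_counts :: counts where
  "root_counts = (\<lambda>_. 1)"

definition incr :: "counts \<Rightarrow> nat \<Rightarrow> counts" where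
  "incr k c = k(c := k c + 1)"

definition admissible :: "'v mcf_inst \<Rightarrow> (nat \<Rightarrow> nat \<Rightarrow> 'v list) \<Rightarrow> nat \<Rightarrow> nat \<Rightarrow> bool" where
  "admissible I ksp c j \<longleftrightarrow> j \<le> npaths I c \<and>
     path_cost I (ksp c j) \<le> wmcf I * path_cost I (ksp c 1)"

text \<open>Nodes of the conflict tree (identified with their count vectors; the stored solution
  of a node k is solve k).\<close>
inductive_set ctree ::
  "'v mcf_inst \<Rightarrow> (nat \<Rightarrow> nat \<Rightarrow> 'v list) \<Rightarrow> (counts \<Rightarrow> 'v flowv option) \<Rightarrow> counts set"
  for I ksp solve where
  root: "solve root_counts \<noteq> None \<Longrightarrow> root_counts \<in> ctree I ksp solve"
| child: "\<lbrakk> k \<in> ctree I ksp solve; solve k = Some y; conflict_set I y \<noteq> {};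
            c < ncom I; passes_conflict I y c; admissible I ksp c (k c + 1);
            solve (incr k c) \<noteq> None \<rbrakk> \<Longrightarrow> incr k c \<in> ctree I ksp solve"

text \<open>States of the search: (OPEN, visited count vectors).  Initial state.\<close>
definition mcfod_init ::
  "(counts \<Rightarrow> 'v flowv option) \<Rightarrow> counts set \<times> counts set" where
  "mcfod_init solve =
     ((if solve root_counts \<noteq> None then {root_counts} else {}), {root_counts})"

text \<open>One iteration that does not terminate: pop a node P of lowest cost with nonempty
  conflict set and expand it.  Ties in OPEN are broken arbitrarily.\<close>
definition mcfod_step ::
  "'v mcf_inst \<Rightarrow> (nat \<Rightarrow> nat \<Rightarrow> 'v list) \<Rightarrow> (counts \<Rightarrow> 'v flowv option)
   \<Rightarrow> counts set \<times> counts set \<Rightarrow> counts set \<times> counts set \<Rightarrow> bool" where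
  "mcfod_step I ksp solve S S' \<longleftrightarrow>
     (\<exists>P y. P \<in> fst S \<and> (\<forall>Q\<in>fst S. node_cost I ksp P \<le> node_cost I ksp Q)
        \<and> solve P = Some y \<and> conflict_set I y \<noteq> {}
        \<and> (let Ch = {c. c < ncom I \<and> passes_conflict I y c};
               New = incr P ` Ch - snd S;
               Ins = {k\<in>New. \<exists>c\<in>Ch. k = incr P c \<and> admissible I ksp c (P c + 1)
                                 \<and> solve k \<noteq> None}
           in S' = ((fst S - {P}) \<union> Ins, snd S \<union> New)))"

definition mcfod_returns ::
  "'v mcf_inst \<Rightarrow> (nat \<Rightarrow> nat \<Rightarrow> 'v list) \<Rightarrow> (counts \<Rightarrow> 'v flowv option) \<Rightarrow> counts \<Rightarrow> bool" where
  "mcfod_returns I ksp solve P \<longleftrightarrow>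
     (\<exists>S. (mcfod_step I ksp solve)\<^sup>*\<^sup>* (mcfod_init solve) S
        \<and> P \<in> fst S \<and> (\<forall>Q\<in>fst S. node_cost I ksp P \<le> node_cost I ksp Q)
        \<and> (\<exists>y. solve P = Some y \<and> conflict_set I y = {}))"

end

theory Submission
  imports Defs
begin

text \<open>Node costs grow along the edges of the conflict tree, because a child only adds an
  allowed path to one commodity.  The search maintains the invariant that every conflict-tree
  node which has been visited but is no longer in OPEN was expanded: it has a conflict and all
  its children have been visited.  Following the tree from the root, every conflict-tree node
  is therefore either such an expanded node or a descendant of a node still in OPEN, whose cost
  it dominates.  A conflict-free node cannot be expanded, so its cost is at least the minimal
  cost in OPEN, which is the cost of the returned node.\<close>

lemma ctree_solvable:
  "K \<in> ctree I ksp solve \<Longrightarrow> solve K \<noteq> None"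
  by (induction rule: ctree.induct) auto

lemma ctree_counts_pos:
  "K \<in> ctree I ksp solve \<Longrightarrow> 1 \<le> K c"
  by (induction rule: ctree.induct) (auto simp: root_counts_def incr_def)

lemma ctree_admissible:
  "K \<in> ctree I ksp solve \<Longrightarrow> 1 < K c \<Longrightarrow> admissible I ksp c (K c)"
  by (induction rule: ctree.induct) (auto simp: root_counts_def incr_def)

lemma allowed_paths_mono:
  "k c \<le> k' c \<Longrightarrow> allowed_paths ksp k c \<subseteq> allowed_paths ksp k' c"
  unfolding allowed_paths_def by auto

lemma node_cost_mono:
  assumes "\<And>c. c < ncom I \<Longrightarrow> 1 \<le> k c" and "\<And>c. k c \<le> k' c"
  shows "node_cost I ksp k \<le> node_cost I ksp k'"
  unfolding node_cost_def
proof (rule sum_mono)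
  fix c assume "c \<in> {..<ncom I}"
  then have "allowed_paths ksp k c \<noteq> {}"
    using assms(1) by (auto simp: allowed_paths_def)
  moreover have "finite (allowed_paths ksp k' c)"
    by (simp add: allowed_paths_def)
  ultimately show "Max (path_cost I ` allowed_paths ksp k c)
      \<le> Max (path_cost I ` allowed_paths ksp k' c)"
    using allowed_paths_mono[of k c k' ksp, OF assms(2)] by (intro Max_mono image_mono) auto
qed

lemma node_cost_incr:
  "K \<in> ctree I ksp solve \<Longrightarrow> node_cost I ksp K \<le> node_cost I ksp (incr K c)"
  by (rule node_cost_mono[OF ctree_counts_pos]) (simp_all add: incr_def)

definition expanded ::
  "'v mcf_inst \<Rightarrow> (counts \<Rightarrow> 'v flowv option) \<Rightarrow> counts set \<Rightarrow> counts \<Rightarrow> bool" where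
  "expanded I solve visited K \<longleftrightarrow> (\<exists>y. solve K = Some y \<and> conflict_set I y \<noteq> {}
     \<and> (\<forall>c<ncom I. passes_conflict I y c \<longrightarrow> incr K c \<in> visited))"

lemma expanded_mono:
  "expanded I solve V K \<Longrightarrow> V \<subseteq> V' \<Longrightarrow> expanded I solve V' K"
  unfolding expanded_def by blast

definition mcfod_invariant ::
  "'v mcf_inst \<Rightarrow> (nat \<Rightarrow> nat \<Rightarrow> 'v list) \<Rightarrow> (counts \<Rightarrow> 'v flowv option)
   \<Rightarrow> counts set \<times> counts set \<Rightarrow> bool" where
  "mcfod_invariant I ksp solve S \<longleftrightarrow> root_counts \<in> snd S \<and> fst S \<subseteq> ctree I ksp solve
     \<and> (\<forall>K \<in> ctree I ksp solve \<inter> snd S - fst S. expanded I solve (snd S) K)"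

lemma mcfod_invariant_init: "mcfod_invariant I ksp solve (mcfod_init solve)"
  unfolding mcfod_invariant_def mcfod_init_def
  by (auto intro: ctree.root dest: ctree_solvable)

lemma mcfod_stepE:
  assumes "mcfod_step I ksp solve S S'"
  obtains P y where "P \<in> fst S" "solve P = Some y" "conflict_set I y \<noteq> {}"
    and "snd S' = snd S \<union> incr P ` {c. c < ncom I \<and> passes_conflict I y c}"
    and "\<And>K. K \<in> fst S' \<longleftrightarrow> K \<in> fst S \<and> K \<noteq> P
      \<or> K \<notin> snd S \<and> solve K \<noteq> None \<and> (\<exists>c<ncom I. passes_conflict I y c \<and> K = incr P c
          \<and> admissible I ksp c (P c + 1))"
proof -
  from assms obtain P y where "P \<in> fst S" "solve P = Some y" "conflict_set I y \<noteq> {}"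
    and S': "S' = ((fst S - {P}) \<union> {K \<in> incr P ` {c. c < ncom I \<and> passes_conflict I y c} - snd S.
        \<exists>c \<in> {c. c < ncom I \<and> passes_conflict I y c}. K = incr P c
          \<and> admissible I ksp c (P c + 1) \<and> solve K \<noteq> None},
      snd S \<union> (incr P ` {c. c < ncom I \<and> passes_conflict I y c} - snd S))"
    unfolding mcfod_step_def Let_def by blast
  then show thesis
    by (intro that[of P y]) (auto simp: S')
qed

lemma mcfod_invariant_step:
  assumes step: "mcfod_step I ksp solve S S'" and inv: "mcfod_invariant I ksp solve S"
  shows "mcfod_invariant I ksp solve S'"
proof -
  obtain P y where P: "P \<in> fst S" "solve P = Some y" "conflict_set I y \<noteq> {}"
    and visited: "snd S' = snd S \<union> incr P ` {c. c < ncom I \<and> passes_conflict I y c}"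
    and open_iff: "\<And>K. K \<in> fst S' \<longleftrightarrow> K \<in> fst S \<and> K \<noteq> P
      \<or> K \<notin> snd S \<and> solve K \<noteq> None \<and> (\<exists>c<ncom I. passes_conflict I y c \<and> K = incr P c
          \<and> admissible I ksp c (P c + 1))"
    by (rule mcfod_stepE[OF step]) simp_all
  have P_ctree: "P \<in> ctree I ksp solve"
    using inv P(1) by (auto simp: mcfod_invariant_def)
  have "fst S' \<subseteq> ctree I ksp solve"
    using inv ctree.child[OF P_ctree P(2,3)] by (auto simp: open_iff mcfod_invariant_def)
  moreover have "expanded I solve (snd S') K" if K: "K \<in> ctree I ksp solve \<inter> snd S' - fst S'" for K
  proof -
    consider "K = P" | "K \<noteq> P" "K \<in> snd S" | "K \<notin> snd S"
      by blast
    then show ?thesis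
    proof cases
      case 1
      then show ?thesis
        using P visited by (auto simp: expanded_def)
    next
      case 2
      then have "expanded I solve (snd S) K"
        using inv K by (auto simp: open_iff mcfod_invariant_def)
      then show ?thesis
        using visited by (auto elim: expanded_mono)
    next
      case 3
      then obtain c where c: "c < ncom I" "passes_conflict I y c" "K = incr P c"
        using K visited by auto
      have "admissible I ksp c (P c + 1)"
        using ctree_admissible[of K I ksp solve c] ctree_counts_pos[OF P_ctree, of c] K c(3)
        by (simp add: incr_def)
      then have "K \<in> fst S'"
        using 3 c K ctree_solvable by (auto simp: open_iff)
      then show ?thesis
        using K by blast
    qed
  qed
  ultimately show ?thesis
    using inv visited by (auto simp: mcfod_invariant_def)
qed

lemma mcfod_invariant_reachable:
  "(mcfod_step I ksp solve)\<^sup>*\<^sup>* (mcfod_init solve) S \<Longrightarrow> mcfod_invariant I ksp solve S"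
  by (induction rule: rtranclp_induct) (auto intro: mcfod_invariant_init mcfod_invariant_step)

lemma ctree_dominated_or_expanded:
  assumes inv: "mcfod_invariant I ksp solve S" and A: "A \<in> ctree I ksp solve"
  shows "(\<exists>Q\<in>fst S. node_cost I ksp Q \<le> node_cost I ksp A) \<or> expanded I solve (snd S) A"
proof -
  have visited_node: "(\<exists>Q\<in>fst S. node_cost I ksp Q \<le> node_cost I ksp K) \<or> expanded I solve (snd S) K"
    if "K \<in> ctree I ksp solve" "K \<in> snd S" for K
    using inv that by (auto simp: mcfod_invariant_def)
  from A show ?thesis
  proof (induction rule: ctree.induct)
    case root
    then show ?case
      using inv by (intro visited_node) (auto simp: mcfod_invariant_def intro: ctree.root)
  next
    case (child k y c)
    have child_ctree: "incr k c \<in> ctree I ksp solve"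
      using child.hyps by (rule ctree.child)
    from child.IH show ?case
    proof
      assume "\<exists>Q\<in>fst S. node_cost I ksp Q \<le> node_cost I ksp k"
      then show ?thesis
        using node_cost_incr[OF child.hyps(1), of c] by (blast intro: order_trans)
    next
      assume "expanded I solve (snd S) k"
      then have "incr k c \<in> snd S"
        using child.hyps by (auto simp: expanded_def)
      then show ?thesis
        using visited_node child_ctree by blast
    qed
  qed
qed

theorem mainTheorem2:
  fixes I :: "'v mcf_inst"
    and ksp :: "nat \<Rightarrow> nat \<Rightarrow> 'v list"
    and solve :: "counts \<Rightarrow> 'v flowv option"
    and P :: counts
  assumes "wf_inst I"
    and "is_ksp I ksp"
    and "is_rmcf_solver I ksp solve"
    and "mcfod_returns I ksp solve P"
  shows "\<forall>A\<in>ctree I ksp solve. (\<forall>yA. solve A = Some yA \<and> conflict_set I yA = {}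
            \<longrightarrow> node_cost I ksp P \<le> node_cost I ksp A)"
proof (intro ballI allI impI)
  fix A yA
  assume A: "A \<in> ctree I ksp solve" and conflict_free: "solve A = Some yA \<and> conflict_set I yA = {}"
  obtain S where S: "(mcfod_step I ksp solve)\<^sup>*\<^sup>* (mcfod_init solve) S"
    and P_min: "\<forall>Q\<in>fst S. node_cost I ksp P \<le> node_cost I ksp Q"
    using assms(4) unfolding mcfod_returns_def by blast
  have "\<not> expanded I solve (snd S) A"
    using conflict_free by (auto simp: expanded_def)
  then obtain Q where "Q \<in> fst S" "node_cost I ksp Q \<le> node_cost I ksp A"
    using ctree_dominated_or_expanded[OF mcfod_invariant_reachable[OF S] A] by blast
  then show "node_cost I ksp P \<le> node_cost I ksp A"
    using P_min by force
qed

end
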